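(* For every $n\ge 3$, the Grothendieck constant of the circuit (cycle) $C_n$ of length $n$ is $\kappa(C_n)=\frac{n}{n-2}\cos\left(\frac{\pi}{n}\right)$.
   Context: For a graph $G=([n],E)$ and $w\in\mathbb{R}^E$, let $\mathrm{ip}(G,w)=\max_{x\in\{\pm1\}^n}\sum_{ij\in E}w_{ij}x_ix_j$ and $\mathrm{sdp}(G,w)=\max\sum_{ij\in E}w_{ij}u_i^Tu_j$, the maximum over unit vectors $u_1,\dots,u_n\in\mathbb{R}^n$. The Grothendieck constant of $G$ is $\kappa(G)=\sup_{w\in\mathbb{R}^E}\mathrm{sdp}(G,w)/\mathrm{ip}(G,w)$. *)

theory Defs
  imports Complex_Main
begin

text \<open>A graph on the vertex set [n] = {0..<n} is given by its edge set E, a set of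
  pairs (i,j) with i < j < n (each undirected edge listed once).
  Edge weights are functions w from pairs to reals (only values on E matter).
  Vectors in R^n are functions nat => real, of which only the coordinates k < n matter.\<close>

definition ip :: "nat \<Rightarrow> (nat \<times> nat) set \<Rightarrow> (nat \<times> nat \<Rightarrow> real) \<Rightarrow> real" where
  "ip n E w = Max {(\<Sum>(i,j)\<in>E. w (i,j) * x i * x j) | x :: nat \<Rightarrow> real.
                     (\<forall>i<n. x i \<in> {-1, 1}) \<and> (\<forall>i\<ge>n. x i = 0)}"

definition sdp :: "nat \<Rightarrow> (nat \<times> nat) set \<Rightarrow> (nat \<times> nat \<Rightarrow> real) \<Rightarrow> real" where
  "sdp n E w = Sup {(\<Sum>(i,j)\<in>E. w (i,j) * (\<Sum>k<n. u i k * u j k)) | u :: nat \<Rightarrow> nat \<Rightarrow> real.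
                     \<forall>i<n. (\<Sum>k<n. (u i k)\<^sup>2) = 1}"

definition grothendieck_const :: "nat \<Rightarrow> (nat \<times> nat) set \<Rightarrow> real" where
  "grothendieck_const n E = (SUP w. sdp n E w / ip n E w)"

definition cycle_edges :: "nat \<Rightarrow> (nat \<times> nat) set" where
  "cycle_edges n = {(i, i + 1) | i. i + 1 < n} \<union> {(0, n - 1)}"

end

theory Submission
  imports Defs "HOL-Analysis.Convex"
begin

text \<open>Multiplying the signs of the vertices by \<open>\<plusminus>1\<close> (switching) changes neither the
  integer nor the vector optimum, and it turns every weighting of \<open>C\<^sub>n\<close> into one with
  nonnegative weights \<open>\<bar>w\<^sub>k\<bar>\<close>, except that the product of the edge signs, the sign of the
  cycle, is invariant. For a balanced cycle the all-ones assignment already attains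
  \<open>\<Sum>\<bar>w\<^sub>k\<bar>\<close>, which bounds the vector value. For an unbalanced cycle the angles between
  consecutive switched unit vectors, one of them reflected, sum to at least \<open>\<pi>\<close> by the
  triangle inequality for spherical distance, so by concavity of \<open>cos\<close> the signed inner
  products sum to at most \<open>n cos (\<pi>/n)\<close>; comparing with the assignment that cuts the lightest
  edge, of value \<open>\<Sum>\<bar>w\<^sub>k\<bar> - 2 min \<bar>w\<^sub>k\<bar>\<close>, gives the ratio \<open>n/(n-2) cos (\<pi>/n)\<close>.
  It is attained by unit weights with one negative edge and vectors rotating by \<open>\<pi>/n\<close> in a
  plane.\<close>

section \<open>Cosine estimates\<close>

lemma cos_le_tangent_line:
  fixes t a :: real
  assumes "0 < t" "t \<le> pi/2" "0 \<le> a" "a \<le> pi - t"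
  shows "cos a \<le> cos t - sin t * (a - t)"
proof -
  have der: "\<And>x. DERIV cos x :> - sin x" by (auto intro!: derivative_eq_intros)
  consider "a = t" | "a < t" | "t < a" by linarith
  then show ?thesis
  proof cases
    case 1 then show ?thesis by simp
  next
    case 2
    obtain z where z: "a < z" "z < t" "cos t - cos a = (t - a) * - sin z"
      using MVT2[OF 2, of cos "\<lambda>x. - sin x"] der by blast
    have "sin z \<le> sin t" using z assms by (intro sin_monotone_2pi_le) auto
    then have "(t - a) * sin z \<le> (t - a) * sin t" using 2 by (intro mult_left_mono) auto
    then show ?thesis using z by (simp add: algebra_simps)
  next
    case 3
    obtain z where z: "t < z" "z < a" "cos a - cos t = (a - t) * - sin z"
      using MVT2[OF 3, of cos "\<lambda>x. - sin x"] der by blast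
    have "sin t \<le> sin z"
    proof (cases "z \<le> pi/2")
      case True then show ?thesis using z assms by (intro sin_monotone_2pi_le) auto
    next
      case False
      have "sin t \<le> sin (pi - z)" using z assms False by (intro sin_monotone_2pi_le) auto
      then show ?thesis by simp
    qed
    then have "(a - t) * sin t \<le> (a - t) * sin z" using 3 by (intro mult_left_mono) auto
    then show ?thesis using z by (simp add: algebra_simps)
  qed
qed

lemma one_minus_square_half_le_cos: "1 - x\<^sup>2 / 2 \<le> cos (x::real)"
proof -
  have "\<bar>sin (x/2)\<bar> \<le> \<bar>x/2\<bar>" by (rule abs_sin_x_le_abs_x)
  then have "(sin (x/2))\<^sup>2 \<le> (x/2)\<^sup>2" by (metis abs_le_square_iff)
  moreover have "cos x = 1 - 2 * (sin (x/2))\<^sup>2" using cos_double_sin[of "x/2"] by simp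
  ultimately show ?thesis by (simp add: power_divide)
qed

lemma cos_pi_div_ge:
  assumes "3 \<le> n"
  shows "real n - 1 \<le> (real n + 1) * cos (pi / real n)"
proof -
  consider "n = 3" | "n = 4" | "5 \<le> n" using assms by linarith
  then show ?thesis
  proof cases
    case 1 then show ?thesis by (simp add: cos_60)
  next
    case 2
    have "(6::real)^2 \<le> (5 * sqrt 2)^2" by (simp add: power_mult_distrib)
    then have "6 \<le> 5 * sqrt (2::real)" by (rule power2_le_imp_le) auto
    then show ?thesis using 2 by (simp add: cos_45)
  next
    case 3
    then have n5: "5 \<le> real n" by simp
    have "(pi / real n)\<^sup>2 \<le> (4 / real n)\<^sup>2"
      using pi_less_4 n5 by (intro power_mono divide_right_mono) auto
    then have "1 - 8 / (real n)\<^sup>2 \<le> cos (pi / real n)"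
      using one_minus_square_half_le_cos[of "pi / real n"] by (simp add: power_divide)
    moreover have "real n - 1 \<le> (real n + 1) * (1 - 8 / (real n)\<^sup>2)"
    proof -
      have "5 * real n \<le> real n * real n" using n5 by (intro mult_right_mono) auto
      then have "8 * (real n + 1) \<le> 2 * (real n)\<^sup>2" using n5 unfolding power2_eq_square by argo
      then have "8 * (real n + 1) / (real n)\<^sup>2 \<le> 2" using n5 by (simp add: divide_simps)
      then show ?thesis by (simp add: algebra_simps)
    qed
    ultimately show ?thesis by (smt (verit) mult_left_mono of_nat_0_le_iff)
  qed
qed

lemma sum_cos_le_of_sum_ge_pi:
  fixes \<alpha> :: "nat \<Rightarrow> real"
  assumes n: "3 \<le> n" and \<alpha>: "\<And>k. k < n \<Longrightarrow> 0 \<le> \<alpha> k \<and> \<alpha> k \<le> pi"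
    and sum: "pi \<le> (\<Sum>k<n. \<alpha> k)"
  shows "(\<Sum>k<n. cos (\<alpha> k)) \<le> real n * cos (pi / real n)"
proof -
  define t where "t = pi / real n"
  have t0: "0 < t" and t2: "t \<le> pi/2" and nt: "real n * t = pi"
    unfolding t_def using n by (simp_all add: divide_simps)
  show ?thesis
  proof (cases "\<forall>k<n. \<alpha> k \<le> pi - t")
    case True
    have "(\<Sum>k<n. cos (\<alpha> k)) \<le> (\<Sum>k<n. cos t - sin t * (\<alpha> k - t))"
      using True \<alpha> t0 t2 by (intro sum_mono cos_le_tangent_line) auto
    also have "\<dots> = real n * cos t - sin t * ((\<Sum>k<n. \<alpha> k) - real n * t)"
      by (simp add: sum_subtractf sum_distrib_left[symmetric] algebra_simps)
    also have "\<dots> \<le> real n * cos t"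
      using sin_ge_zero[of t] t0 t2 sum nt by (simp add: mult_nonneg_nonneg)
    finally show ?thesis unfolding t_def .
  next
    case False
    \<comment> \<open>a single angle beyond \<open>pi - t\<close> already forces the bound, with \<open>cos \<le> 1\<close> for the rest\<close>
    then obtain j where j: "j < n" "pi - t < \<alpha> j" by auto
    have "cos (\<alpha> j) < cos (pi - t)" using j \<alpha> t2 t0 by (intro cos_monotone_0_pi) auto
    then have cj: "cos (\<alpha> j) \<le> - cos t" by simp
    have "(\<Sum>k<n. cos (\<alpha> k)) = cos (\<alpha> j) + (\<Sum>k\<in>{..<n}-{j}. cos (\<alpha> k))"
      using j by (simp add: sum.remove)
    also have "(\<Sum>k\<in>{..<n}-{j}. cos (\<alpha> k)) \<le> (\<Sum>k\<in>{..<n}-{j}. 1)"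
      by (intro sum_mono) auto
    also have "\<dots> = real n - 1" using j by simp
    finally have "(\<Sum>k<n. cos (\<alpha> k)) \<le> - cos t + (real n - 1)" using cj by linarith
    also have "\<dots> \<le> real n * cos t" using cos_pi_div_ge[OF n] unfolding t_def
      by (simp add: algebra_simps)
    finally show ?thesis unfolding t_def .
  qed
qed

lemma sum_le_of_sum_arccos_ge_pi:
  fixes c :: "nat \<Rightarrow> real"
  assumes n: "3 \<le> n" and c: "\<And>k. k < n \<Longrightarrow> \<bar>c k\<bar> \<le> 1"
    and sum: "pi \<le> (\<Sum>k<n. arccos (c k))"
  shows "(\<Sum>k<n. c k) \<le> real n * cos (pi / real n)"
proof -
  have "(\<Sum>k<n. cos (arccos (c k))) \<le> real n * cos (pi / real n)"
    using c arccos_bounded by (intro sum_cos_le_of_sum_ge_pi[OF n _ sum]) (auto simp: abs_le_iff)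
  moreover have "(\<Sum>k<n. cos (arccos (c k))) = (\<Sum>k<n. c k)"
    using c by (intro sum.cong) (auto simp: abs_le_iff)
  ultimately show ?thesis by simp
qed

section \<open>Angles between unit vectors\<close>

definition vdot :: "nat \<Rightarrow> (nat \<Rightarrow> real) \<Rightarrow> (nat \<Rightarrow> real) \<Rightarrow> real" where
  "vdot n a b = (\<Sum>k<n. a k * b k)"

lemma vdot_commute: "vdot n a b = vdot n b a"
  unfolding vdot_def by (simp add: mult.commute)

lemma vdot_Cauchy_Schwarz: "(vdot n a b)\<^sup>2 \<le> vdot n a a * vdot n b b"
  unfolding vdot_def using Cauchy_Schwarz_ineq_sum[of a b "{..<n}"] by (simp add: power2_eq_square)

lemma abs_vdot_le_1:
  assumes "vdot n a a = 1" "vdot n b b = 1"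
  shows "\<bar>vdot n a b\<bar> \<le> 1"
  using vdot_Cauchy_Schwarz[of n a b] assms abs_le_square_iff[of "vdot n a b" 1] by simp

lemma vdot_diff_scaled:
  "vdot n (\<lambda>k. a k - p * b k) (\<lambda>k. c k - q * b k)
     = vdot n a c - q * vdot n a b - p * vdot n b c + p * q * vdot n b b"
  unfolding vdot_def by (simp add: algebra_simps sum_subtractf sum.distrib sum_distrib_left)

lemma arccos_vdot_triangle:
  assumes a: "vdot n a a = 1" and b: "vdot n b b = 1" and c: "vdot n c c = 1"
  shows "arccos (vdot n a c) \<le> arccos (vdot n a b) + arccos (vdot n b c)"
proof -
  define p q r where "p = vdot n a b" and "q = vdot n b c" and "r = vdot n a c"
  have p1: "\<bar>p\<bar> \<le> 1" and q1: "\<bar>q\<bar> \<le> 1" and r1: "\<bar>r\<bar> \<le> 1"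
    unfolding p_def q_def r_def using abs_vdot_le_1 a b c by blast+
  define \<beta> \<gamma> where "\<beta> = arccos p" and "\<gamma> = arccos q"
  have \<beta>: "0 \<le> \<beta>" "\<beta> \<le> pi" and \<gamma>: "0 \<le> \<gamma>" "\<gamma> \<le> pi"
    unfolding \<beta>_def \<gamma>_def using p1 q1 arccos_bounded by auto
  show ?thesis
  proof (cases "pi \<le> \<beta> + \<gamma>")
    case True
    then show ?thesis
      using r1 arccos_bounded[of r] unfolding \<beta>_def \<gamma>_def p_def q_def r_def by (auto simp: abs_le_iff)
  next
    case False
    \<comment> \<open>the components of \<open>a\<close> and \<open>c\<close> orthogonal to \<open>b\<close>\<close>
    define a' c' where "a' k = a k - p * b k" and "c' k = c k - q * b k" for k
    have "vdot n a' c' = r - p * q" "vdot n a' a' = 1 - p\<^sup>2" "vdot n c' c' = 1 - q\<^sup>2"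
      using vdot_diff_scaled[of n a p b c q] vdot_diff_scaled[of n a p b a p]
        vdot_diff_scaled[of n c q b c q] a b c vdot_commute[of n b a] vdot_commute[of n b c]
      unfolding a'_def c'_def p_def q_def r_def by (simp_all add: power2_eq_square)
    then have "(r - p * q)\<^sup>2 \<le> (1 - p\<^sup>2) * (1 - q\<^sup>2)"
      using vdot_Cauchy_Schwarz[of n a' c'] by simp
    then have "\<bar>r - p * q\<bar> \<le> sqrt (1 - p\<^sup>2) * sqrt (1 - q\<^sup>2)"
      by (metis real_sqrt_abs real_sqrt_le_mono real_sqrt_mult)
    moreover have "cos (\<beta> + \<gamma>) = p * q - sqrt (1 - p\<^sup>2) * sqrt (1 - q\<^sup>2)"
      unfolding cos_add \<beta>_def \<gamma>_def using p1 q1 by (simp add: sin_arccos)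
    ultimately have "cos (\<beta> + \<gamma>) \<le> r" by linarith
    then have "arccos r \<le> arccos (cos (\<beta> + \<gamma>))"
      using r1 by (intro arccos_le_arccos) (auto simp: abs_le_iff)
    also have "\<dots> = \<beta> + \<gamma>" using \<beta> \<gamma> False by (intro arccos_cos) auto
    finally show ?thesis unfolding \<beta>_def \<gamma>_def p_def q_def r_def .
  qed
qed

lemma arccos_vdot_path:
  assumes unit: "\<And>i. i \<le> m \<Longrightarrow> vdot n (v i) (v i) = 1"
  shows "arccos (vdot n (v 0) (v m)) \<le> (\<Sum>k<m. arccos (vdot n (v k) (v (Suc k))))"
  using unit
proof (induction m)
  case 0
  then show ?case by simp
next
  case (Suc m)
  have "arccos (vdot n (v 0) (v (Suc m)))
      \<le> arccos (vdot n (v 0) (v m)) + arccos (vdot n (v m) (v (Suc m)))"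
    using Suc.prems by (intro arccos_vdot_triangle) auto
  then show ?case using Suc by simp
qed

definition switching :: "(nat \<Rightarrow> real) \<Rightarrow> nat \<Rightarrow> real" where
  "switching s i = (\<Prod>k<i. s k)"

lemma switching_0 [simp]: "switching s 0 = 1"
  by (simp add: switching_def)

lemma switching_Suc: "switching s (Suc i) = switching s i * s i"
  by (simp add: switching_def)

lemma switching_square:
  assumes "\<And>k. s k * s k = 1"
  shows "switching s i * switching s i = 1"
  by (induction i) (simp_all add: switching_Suc assms algebra_simps)

lemma sum_arccos_unbalanced_cycle_ge_pi:
  assumes unit: "\<And>i. i \<le> m \<Longrightarrow> vdot n (u i) (u i) = 1"
    and s: "\<And>k. s k * s k = 1" and unbalanced: "(\<Prod>k\<le>m. s k) = -1"
  shows "pi \<le> (\<Sum>k<m. arccos (s k * vdot n (u k) (u (Suc k)))) + arccos (s m * vdot n (u 0) (u m))"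
proof -
  define v where "v i k = switching s i * u i k" for i k
  have vdot_v: "vdot n (v i) (v j) = switching s i * switching s j * vdot n (u i) (u j)" for i j
    unfolding v_def vdot_def by (simp add: sum_distrib_left algebra_simps)
  have unit_v: "vdot n (v i) (v i) = 1" if "i \<le> m" for i
    using unit[OF that] switching_square[OF s] by (simp add: vdot_v)
  have step: "s k * vdot n (u k) (u (Suc k)) = vdot n (v k) (v (Suc k))" for k
  proof -
    have "vdot n (v k) (v (Suc k)) = (switching s k * switching s k) * s k * vdot n (u k) (u (Suc k))"
      by (simp add: vdot_v switching_Suc algebra_simps)
    then show ?thesis using switching_square[OF s] by simp
  qed
  have close: "s m * vdot n (u 0) (u m) = - vdot n (v 0) (v m)"
  proof -
    have "switching s m * s m = -1"
      using unbalanced by (simp add: switching_def flip: lessThan_Suc_atMost)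
    then have "s m = - switching s m"
      using switching_square[of s m, OF s] by (metis minus_mult_minus mult.assoc mult_1 mult_minus1)
    then show ?thesis by (simp add: vdot_v)
  qed
  have "\<bar>vdot n (v 0) (v m)\<bar> \<le> 1" using abs_vdot_le_1 unit_v by auto
  then have "arccos (- vdot n (v 0) (v m)) = pi - arccos (vdot n (v 0) (v m))"
    by (intro arccos_minus) (auto simp: abs_le_iff)
  moreover have "arccos (vdot n (v 0) (v m)) \<le> (\<Sum>k<m. arccos (vdot n (v k) (v (Suc k))))"
    using unit_v by (rule arccos_vdot_path)
  ultimately show ?thesis by (simp add: step close)
qed

section \<open>The two optimisation problems on the cycle\<close>

definition cycle_edge :: "nat \<Rightarrow> nat \<Rightarrow> nat \<times> nat" where
  "cycle_edge n k = (if k < n - 1 then (k, Suc k) else (0, n - 1))"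

lemma sum_cycle_edges:
  assumes "3 \<le> n"
  shows "(\<Sum>e\<in>cycle_edges n. f e) = (\<Sum>k<n. f (cycle_edge n k))"
proof -
  have "cycle_edges n = cycle_edge n ` {..<n}"
    using assms unfolding cycle_edges_def cycle_edge_def by (auto simp: image_iff) presburger+
  moreover have "inj_on (cycle_edge n) {..<n}"
    using assms unfolding cycle_edge_def by (auto simp: inj_on_def split: if_splits)
  ultimately show ?thesis by (simp add: sum.reindex)
qed

lemma sum_cycle_edge_split:
  assumes "0 < n"
  shows "(\<Sum>k<n. f (cycle_edge n k)) = (\<Sum>k<n-1. f (k, Suc k)) + f (0, n-1)"
proof -
  have "(\<Sum>k<Suc (n-1). f (cycle_edge n k)) = (\<Sum>k<n-1. f (k, Suc k)) + f (0, n-1)"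
    by (simp add: cycle_edge_def)
  then show ?thesis using assms by simp
qed

lemma prod_cycle_edge_split:
  assumes "0 < n"
  shows "(\<Prod>k<n. f (cycle_edge n k)) = (\<Prod>k<n-1. f (k, Suc k)) * f (0, n-1)"
proof -
  have "(\<Prod>k<Suc (n-1). f (cycle_edge n k)) = (\<Prod>k<n-1. f (k, Suc k)) * f (0, n-1)"
    by (simp add: cycle_edge_def)
  then show ?thesis using assms by simp
qed

definition sign_vectors :: "nat \<Rightarrow> (nat \<Rightarrow> real) set" where
  "sign_vectors n = {x. (\<forall>i<n. x i \<in> {-1, 1}) \<and> (\<forall>i\<ge>n. x i = 0)}"

lemma finite_sign_vectors: "finite (sign_vectors n)"
proof (rule finite_subset)
  show "sign_vectors n \<subseteq> (\<lambda>f i. if i < n then f i else 0) ` (PiE {..<n} (\<lambda>_. {-1, 1}))"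
  proof
    fix x assume x: "x \<in> sign_vectors n"
    then have "x = (\<lambda>i. if i < n then restrict x {..<n} i else 0)"
      unfolding sign_vectors_def by (auto simp: fun_eq_iff)
    moreover have "restrict x {..<n} \<in> PiE {..<n} (\<lambda>_. {-1, 1})"
      using x unfolding sign_vectors_def by auto
    ultimately show "x \<in> (\<lambda>f i. if i < n then f i else 0) ` (PiE {..<n} (\<lambda>_. {-1, 1}))"
      by blast
  qed
qed (intro finite_imageI finite_PiE, auto)

lemma ip_eq_Max: "ip n E w = Max ((\<lambda>x. \<Sum>(i,j)\<in>E. w (i,j) * x i * x j) ` sign_vectors n)"
  unfolding ip_def sign_vectors_def by (rule arg_cong[where f=Max]) auto

lemma ip_ge:
  assumes "x \<in> sign_vectors n"
  shows "(\<Sum>(i,j)\<in>E. w (i,j) * x i * x j) \<le> ip n E w"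
  unfolding ip_eq_Max using assms finite_sign_vectors by (intro Max_ge) auto

lemma ip_le:
  assumes "\<And>x. x \<in> sign_vectors n \<Longrightarrow> (\<Sum>(i,j)\<in>E. w (i,j) * x i * x j) \<le> B"
  shows "ip n E w \<le> B"
proof -
  have "(\<lambda>i. if i < n then 1 else 0) \<in> sign_vectors n" unfolding sign_vectors_def by auto
  then show ?thesis unfolding ip_eq_Max using assms finite_sign_vectors by (subst Max_le_iff) auto
qed

lemma sdp_eq_Sup:
  "sdp n E w = Sup {(\<Sum>(i,j)\<in>E. w (i,j) * vdot n (u i) (u j)) | u. \<forall>i<n. vdot n (u i) (u i) = 1}"
  unfolding sdp_def vdot_def power2_eq_square ..

lemma sdp_le:
  assumes "0 < n"
    and "\<And>u. \<forall>i<n. vdot n (u i) (u i) = 1 \<Longrightarrow> (\<Sum>(i,j)\<in>E. w (i,j) * vdot n (u i) (u j)) \<le> B"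
  shows "sdp n E w \<le> B"
  unfolding sdp_eq_Sup
proof (rule cSup_least)
  define e :: "nat \<Rightarrow> nat \<Rightarrow> real" where "e i k = (if k = 0 then 1 else 0)" for i k
  have "vdot n (e i) (e i) = (\<Sum>k<n. if k = 0 then 1 else 0)" for i
    unfolding vdot_def e_def by (intro sum.cong) auto
  then have "\<forall>i<n. vdot n (e i) (e i) = 1"
    using assms(1) by simp
  then show "{(\<Sum>(i,j)\<in>E. w (i,j) * vdot n (u i) (u j)) | u. \<forall>i<n. vdot n (u i) (u i) = 1} \<noteq> {}"
    by blast
qed (use assms(2) in blast)

lemma sdp_ge:
  assumes "\<And>u. \<forall>i<n. vdot n (u i) (u i) = 1 \<Longrightarrow> (\<Sum>(i,j)\<in>E. w (i,j) * vdot n (u i) (u j)) \<le> B"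
    and "\<forall>i<n. vdot n (u i) (u i) = 1"
  shows "(\<Sum>(i,j)\<in>E. w (i,j) * vdot n (u i) (u j)) \<le> sdp n E w"
  unfolding sdp_eq_Sup
proof (rule cSup_upper)
  show "bdd_above {(\<Sum>(i,j)\<in>E. w (i,j) * vdot n (u i) (u j)) | u. \<forall>i<n. vdot n (u i) (u i) = 1}"
    using assms(1) by (intro bdd_aboveI) blast
qed (use assms(2) in blast)

section \<open>Switching and the sign of a cycle\<close>

definition pm_sign :: "real \<Rightarrow> real" where
  "pm_sign x = (if 0 \<le> x then 1 else -1)"

lemma pm_sign_square [simp]: "pm_sign x * pm_sign x = 1"
  by (simp add: pm_sign_def)

lemma abs_mult_pm_sign: "\<bar>x\<bar> * pm_sign x = x"
  by (simp add: pm_sign_def)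

lemma pm_sign_mult_self: "pm_sign x * x = \<bar>x\<bar>"
  by (simp add: pm_sign_def)

lemma square_eq_1_iff: "(x::real) * x = 1 \<longleftrightarrow> x \<in> {-1, 1}"
  using power2_eq_1_iff[of x] by (auto simp: power2_eq_square)

definition cycle_sign :: "nat \<Rightarrow> (nat \<times> nat \<Rightarrow> real) \<Rightarrow> real" where
  "cycle_sign n w = (\<Prod>k<n. pm_sign (w (cycle_edge n k)))"

lemma cycle_sign_cases: "cycle_sign n w = 1 \<or> cycle_sign n w = -1"
  using switching_square[of "\<lambda>k. pm_sign (w (cycle_edge n k))" n] square_eq_1_iff
  unfolding cycle_sign_def switching_def by auto

lemma ip_cycle_ge_switched:
  assumes n: "3 \<le> n" and y: "\<And>i. i < n \<Longrightarrow> y i \<in> {-1, 1}"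
  shows "(\<Sum>k<n-1. \<bar>w (k, Suc k)\<bar> * y k * y (Suc k))
           + cycle_sign n w * \<bar>w (0, n-1)\<bar> * y 0 * y (n-1) \<le> ip n (cycle_edges n) w"
proof -
  define s where "s k = pm_sign (w (cycle_edge n k))" for k
  \<comment> \<open>switching by the partial products of edge signs makes every path edge nonnegative\<close>
  define x where "x i = (if i < n then switching s i * y i else 0)" for i
  have P: "switching s i * switching s i = 1" for i
    unfolding s_def by (rule switching_square) simp
  have "switching s i \<in> {-1, 1}" for i
    using P square_eq_1_iff by blast
  then have "x \<in> sign_vectors n"
    using y unfolding sign_vectors_def x_def by fastforce
  then have "(\<Sum>(i,j)\<in>cycle_edges n. w (i,j) * x i * x j) \<le> ip n (cycle_edges n) w"
    by (rule ip_ge)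
  moreover have "w (k, Suc k) * x k * x (Suc k) = \<bar>w (k, Suc k)\<bar> * y k * y (Suc k)"
    if "k < n - 1" for k
  proof -
    have "s k = pm_sign (w (k, Suc k))" "k < n" "Suc k < n"
      using that unfolding s_def cycle_edge_def by simp_all
    then have "w (k, Suc k) * x k * x (Suc k)
        = (switching s k * switching s k) * (pm_sign (w (k, Suc k)) * w (k, Suc k)) * y k * y (Suc k)"
      unfolding x_def by (simp add: switching_Suc algebra_simps)
    then show ?thesis by (simp only: P pm_sign_mult_self mult_1_left)
  qed
  moreover have "w (0, n-1) * x 0 * x (n-1) = cycle_sign n w * \<bar>w (0, n-1)\<bar> * y 0 * y (n-1)"
  proof -
    have "cycle_sign n w = switching s (Suc (n-1))"
      using n unfolding cycle_sign_def s_def switching_def by simp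
    also have "\<dots> = switching s (n-1) * pm_sign (w (0, n-1))"
      by (simp add: switching_Suc s_def cycle_edge_def)
    finally have "cycle_sign n w = switching s (n-1) * pm_sign (w (0, n-1))" .
    then show ?thesis using n abs_mult_pm_sign[of "w (0, n-1)"]
      unfolding x_def by (simp add: algebra_simps)
  qed
  ultimately show ?thesis
    using n by (simp add: sum_cycle_edges sum_cycle_edge_split)
qed

lemma ip_balanced_cycle_ge:
  assumes n: "3 \<le> n" and balanced: "cycle_sign n w = 1"
  shows "(\<Sum>k<n. \<bar>w (cycle_edge n k)\<bar>) \<le> ip n (cycle_edges n) w"
  using ip_cycle_ge_switched[OF n, of "\<lambda>_. 1" w] sum_cycle_edge_split[of n "\<lambda>e. \<bar>w e\<bar>"] n balanced
  by simp

lemma ip_unbalanced_cycle_ge: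
  assumes n: "3 \<le> n" and unbalanced: "cycle_sign n w = -1" and j: "j < n"
  shows "(\<Sum>k<n. \<bar>w (cycle_edge n k)\<bar>) - 2 * \<bar>w (cycle_edge n j)\<bar> \<le> ip n (cycle_edges n) w"
proof -
  define y :: "nat \<Rightarrow> real" where "y i = (if i \<le> j then 1 else -1)" for i
  have "(\<Sum>k<n-1. \<bar>w (k, Suc k)\<bar> * y k * y (Suc k))
      = (\<Sum>k<n-1. \<bar>w (k, Suc k)\<bar> - (if k = j then 2 * \<bar>w (k, Suc k)\<bar> else 0))"
    unfolding y_def by (intro sum.cong) auto
  also have "\<dots> = (\<Sum>k<n-1. \<bar>w (k, Suc k)\<bar>) - (if j < n - 1 then 2 * \<bar>w (j, Suc j)\<bar> else 0)"
    by (simp add: sum_subtractf)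
  moreover have "cycle_sign n w * \<bar>w (0, n-1)\<bar> * y 0 * y (n-1)
      = (if j < n - 1 then \<bar>w (0, n-1)\<bar> else - \<bar>w (0, n-1)\<bar>)"
    using j unbalanced unfolding y_def by auto
  moreover have "(\<Sum>k<n-1. \<bar>w (k, Suc k)\<bar> * y k * y (Suc k))
      + cycle_sign n w * \<bar>w (0, n-1)\<bar> * y 0 * y (n-1) \<le> ip n (cycle_edges n) w"
    by (rule ip_cycle_ge_switched[OF n]) (simp add: y_def)
  ultimately show ?thesis
    using sum_cycle_edge_split[of n "\<lambda>e. \<bar>w e\<bar>"] n j unbalanced
    by (auto simp: cycle_edge_def split: if_splits)
qed

lemma ip_cycle_ge:
  assumes n: "3 \<le> n" and j: "j < n"
  shows "(\<Sum>k<n. \<bar>w (cycle_edge n k)\<bar>) - 2 * \<bar>w (cycle_edge n j)\<bar> \<le> ip n (cycle_edges n) w"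
  using cycle_sign_cases[of n w] ip_balanced_cycle_ge[OF n] ip_unbalanced_cycle_ge[OF n _ j]
  by fastforce

lemma ex_argmin_lessThan:
  fixes f :: "nat \<Rightarrow> 'a::linorder"
  assumes "0 < n"
  obtains j where "j < n" "\<And>k. k < n \<Longrightarrow> f j \<le> f k"
  using arg_min_if_finite[of "{..<n}" f] assms by (metis finite_lessThan lessThan_iff not_less empty_iff)

lemma ip_cycle_nonneg:
  assumes n: "3 \<le> n"
  shows "0 \<le> ip n (cycle_edges n) w"
proof -
  obtain j where j: "j < n" and min: "\<And>k. k < n \<Longrightarrow> \<bar>w (cycle_edge n j)\<bar> \<le> \<bar>w (cycle_edge n k)\<bar>"
    using n ex_argmin_lessThan[of n "\<lambda>k. \<bar>w (cycle_edge n k)\<bar>"] by auto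
  have "real n * \<bar>w (cycle_edge n j)\<bar> \<le> (\<Sum>k<n. \<bar>w (cycle_edge n k)\<bar>)"
    using sum_mono[of "{..<n}" "\<lambda>_. \<bar>w (cycle_edge n j)\<bar>"] min by simp
  moreover have "2 * \<bar>w (cycle_edge n j)\<bar> \<le> real n * \<bar>w (cycle_edge n j)\<bar>"
    using n by (intro mult_right_mono) auto
  ultimately show ?thesis using ip_cycle_ge[OF n j, of w] by linarith
qed

section \<open>The upper bound\<close>

lemma weighted_sum_le_of_min:
  fixes A c :: "nat \<Rightarrow> real"
  assumes min: "\<And>k. k < n \<Longrightarrow> A j \<le> A k" and A: "0 \<le> A j"
    and c: "\<And>k. k < n \<Longrightarrow> c k \<le> 1" and sum: "(\<Sum>k<n. c k) \<le> C * (real n - 2)"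
    and C: "1 \<le> C"
  shows "(\<Sum>k<n. A k * c k) \<le> C * ((\<Sum>k<n. A k) - 2 * A j)"
proof -
  have excess: "0 \<le> (\<Sum>k<n. A k) - real n * A j"
    using sum_mono[of "{..<n}" "\<lambda>_. A j" A] min by simp
  have "(\<Sum>k<n. A k * c k) = A j * (\<Sum>k<n. c k) + (\<Sum>k<n. (A k - A j) * c k)"
    by (simp add: sum_distrib_left left_diff_distrib sum_subtractf)
  also have "(\<Sum>k<n. (A k - A j) * c k) \<le> (\<Sum>k<n. A k - A j)"
    using min c by (intro sum_mono) (simp add: mult_left_le)
  also have "A j * (\<Sum>k<n. c k) \<le> A j * (C * (real n - 2))"
    using sum A by (rule mult_left_mono)
  also have "(\<Sum>k<n. A k - A j) \<le> C * ((\<Sum>k<n. A k) - real n * A j)"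
    using excess C by (simp add: sum_subtractf mult_le_cancel_right1)
  finally show ?thesis by (simp add: algebra_simps)
qed

lemma one_le_cycle_constant:
  assumes n: "3 \<le> n"
  shows "1 \<le> real n / (real n - 2) * cos (pi / real n)"
proof -
  have "real n - 2 \<le> real n * cos (pi / real n)"
    using cos_pi_div_ge[OF n] cos_le_one[of "pi / real n"] unfolding distrib_right by linarith
  then show ?thesis using n by (simp add: field_simps)
qed

definition signed_vdot ::
    "nat \<Rightarrow> (nat \<times> nat \<Rightarrow> real) \<Rightarrow> (nat \<Rightarrow> nat \<Rightarrow> real) \<Rightarrow> nat \<times> nat \<Rightarrow> real" where
  "signed_vdot n w u e = pm_sign (w e) * vdot n (u (fst e)) (u (snd e))"

lemma abs_signed_vdot_cycle_edge_le_1: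
  assumes "\<forall>i<n. vdot n (u i) (u i) = 1" and "k < n"
  shows "\<bar>signed_vdot n w u (cycle_edge n k)\<bar> \<le> 1"
  using assms abs_vdot_le_1 unfolding signed_vdot_def cycle_edge_def
  by (auto simp: abs_mult pm_sign_def)

lemma sum_signed_vdot_unbalanced_cycle_le:
  assumes n: "3 \<le> n" and u: "\<forall>i<n. vdot n (u i) (u i) = 1"
    and unbalanced: "cycle_sign n w = -1"
  shows "(\<Sum>k<n. signed_vdot n w u (cycle_edge n k)) \<le> real n * cos (pi / real n)"
proof (rule sum_le_of_sum_arccos_ge_pi[OF n abs_signed_vdot_cycle_edge_le_1[OF u]])
  have "(\<Sum>k<n-1. arccos (pm_sign (w (cycle_edge n k)) * vdot n (u k) (u (Suc k))))
      = (\<Sum>k<n-1. arccos (signed_vdot n w u (k, Suc k)))"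
    unfolding signed_vdot_def cycle_edge_def by (intro sum.cong) auto
  then have "pi \<le> (\<Sum>k<n-1. arccos (signed_vdot n w u (k, Suc k))) + arccos (signed_vdot n w u (0, n-1))"
    using sum_arccos_unbalanced_cycle_ge_pi[of "n-1" n u "\<lambda>k. pm_sign (w (cycle_edge n k))"]
      u unbalanced n unfolding signed_vdot_def cycle_sign_def
    by (simp add: cycle_edge_def lessThan_Suc_atMost[symmetric])
  then show "pi \<le> (\<Sum>k<n. arccos (signed_vdot n w u (cycle_edge n k)))"
    using sum_cycle_edge_split[of n "\<lambda>e. arccos (signed_vdot n w u e)"] n by simp
qed

lemma cycle_sdp_value_le:
  assumes n: "3 \<le> n" and u: "\<forall>i<n. vdot n (u i) (u i) = 1"
  shows "(\<Sum>(i,j)\<in>cycle_edges n. w (i,j) * vdot n (u i) (u j))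
           \<le> real n / (real n - 2) * cos (pi / real n) * ip n (cycle_edges n) w"
proof -
  define C where "C = real n / (real n - 2) * cos (pi / real n)"
  have C1: "1 \<le> C" unfolding C_def using one_le_cycle_constant[OF n] .
  have C_mult: "C * (real n - 2) = real n * cos (pi / real n)"
    unfolding C_def using n by (simp add: field_simps)
  define A where "A k = \<bar>w (cycle_edge n k)\<bar>" for k
  define c where "c k = signed_vdot n w u (cycle_edge n k)" for k
  have objective: "(\<Sum>(i,j)\<in>cycle_edges n. w (i,j) * vdot n (u i) (u j)) = (\<Sum>k<n. A k * c k)"
    using n unfolding A_def c_def signed_vdot_def
    by (simp add: sum_cycle_edges case_prod_beta mult.assoc[symmetric] abs_mult_pm_sign)
  have c1: "c k \<le> 1" if "k < n" for k
    using abs_signed_vdot_cycle_edge_le_1[OF u that, of w] unfolding c_def by (simp add: abs_le_iff)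
  consider "cycle_sign n w = 1" | "cycle_sign n w = -1" using cycle_sign_cases by blast
  then have "(\<Sum>k<n. A k * c k) \<le> C * ip n (cycle_edges n) w"
  proof cases
    case 1
    have "(\<Sum>k<n. A k * c k) \<le> (\<Sum>k<n. A k)"
      using c1 by (intro sum_mono) (simp add: A_def mult_left_le)
    also have "\<dots> \<le> ip n (cycle_edges n) w"
      unfolding A_def using ip_balanced_cycle_ge[OF n 1] .
    also have "\<dots> \<le> C * ip n (cycle_edges n) w"
      using mult_right_mono[OF C1 ip_cycle_nonneg[OF n, of w]] by simp
    finally show ?thesis .
  next
    case 2
    have "(\<Sum>k<n. c k) \<le> C * (real n - 2)"
      unfolding C_mult c_def by (rule sum_signed_vdot_unbalanced_cycle_le[OF n u 2])
    moreover obtain j where j: "j < n" and min: "\<And>k. k < n \<Longrightarrow> A j \<le> A k"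
      using n ex_argmin_lessThan[of n A] by auto
    ultimately have "(\<Sum>k<n. A k * c k) \<le> C * ((\<Sum>k<n. A k) - 2 * A j)"
      using C1 c1 by (intro weighted_sum_le_of_min) (auto simp: A_def)
    also have "\<dots> \<le> C * ip n (cycle_edges n) w"
      unfolding A_def using ip_unbalanced_cycle_ge[OF n 2 j] C1 by (simp add: mult_left_mono)
    finally show ?thesis .
  qed
  then show ?thesis unfolding objective C_def .
qed

lemma sdp_cycle_le:
  assumes "3 \<le> n"
  shows "sdp n (cycle_edges n) w \<le> real n / (real n - 2) * cos (pi / real n) * ip n (cycle_edges n) w"
  using assms by (intro sdp_le cycle_sdp_value_le) auto

lemma sdp_div_ip_cycle_le:
  assumes n: "3 \<le> n"
  shows "sdp n (cycle_edges n) w / ip n (cycle_edges n) w \<le> real n / (real n - 2) * cos (pi / real n)"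
proof (cases "ip n (cycle_edges n) w = 0")
  case True
  then show ?thesis using one_le_cycle_constant[OF n] by simp
next
  case False
  then have "0 < ip n (cycle_edges n) w" using ip_cycle_nonneg[OF n, of w] by simp
  then show ?thesis using sdp_cycle_le[OF n, of w] by (simp add: pos_divide_le_eq)
qed

section \<open>The extremal weighting\<close>

lemma prod_path_telescope:
  assumes "\<And>i. i \<le> m \<Longrightarrow> x i * x i = (1::real)"
  shows "(\<Prod>k<m. x k * x (Suc k)) = x 0 * x m"
  using assms
proof (induction m)
  case (Suc m)
  then have "(\<Prod>k<Suc m. x k * x (Suc k)) = x 0 * (x m * x m) * x (Suc m)"
    by (simp add: algebra_simps)
  then show ?case using Suc.prems by simp
qed (use assms in simp)

lemma sum_le_of_prod_eq_minus_one:
  fixes p :: "nat \<Rightarrow> real"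
  assumes p: "\<And>k. k < n \<Longrightarrow> p k \<in> {-1, 1}" and prod: "(\<Prod>k<n. p k) = -1"
  shows "(\<Sum>k<n. p k) \<le> real n - 2"
proof -
  have "\<exists>j<n. p j \<noteq> 1"
  proof (rule ccontr)
    assume "\<not> (\<exists>j<n. p j \<noteq> 1)"
    then have "(\<Prod>k<n. p k) = 1" by (intro prod.neutral) auto
    then show False using prod by simp
  qed
  then obtain j where j: "j < n" "p j = -1" using p by blast
  have "(\<Sum>k<n. p k) = p j + (\<Sum>k\<in>{..<n}-{j}. p k)"
    using j by (simp add: sum.remove)
  also have "(\<Sum>k\<in>{..<n}-{j}. p k) \<le> (\<Sum>k\<in>{..<n}-{j}. 1)"
    using p by (intro sum_mono) fastforce
  finally show ?thesis using j by simp
qed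

definition unbalanced_unit_weight :: "nat \<Rightarrow> nat \<times> nat \<Rightarrow> real" where
  "unbalanced_unit_weight n e = (if e = (0, n - 1) then -1 else 1)"

lemma unbalanced_unit_weight_path:
  assumes "3 \<le> n" "k < n - 1"
  shows "unbalanced_unit_weight n (k, Suc k) = 1"
  using assms by (auto simp: unbalanced_unit_weight_def)

lemma pm_sign_unbalanced_unit_weight:
  "pm_sign (unbalanced_unit_weight n e) = unbalanced_unit_weight n e"
  by (simp add: pm_sign_def unbalanced_unit_weight_def)

lemma abs_unbalanced_unit_weight: "\<bar>unbalanced_unit_weight n e\<bar> = 1"
  by (simp add: unbalanced_unit_weight_def)

lemma cycle_sign_unbalanced_unit_weight:
  assumes n: "3 \<le> n"
  shows "cycle_sign n (unbalanced_unit_weight n) = -1"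
proof -
  have "(\<Prod>k<n-1. pm_sign (unbalanced_unit_weight n (k, Suc k))) = 1"
    using n by (intro prod.neutral) (simp add: unbalanced_unit_weight_path pm_sign_def)
  then show ?thesis
    using n prod_cycle_edge_split[of n "\<lambda>e. pm_sign (unbalanced_unit_weight n e)"]
    by (simp add: cycle_sign_def pm_sign_def unbalanced_unit_weight_def)
qed

lemma ip_unbalanced_unit_weight:
  assumes n: "3 \<le> n"
  shows "ip n (cycle_edges n) (unbalanced_unit_weight n) = real n - 2"
proof (rule antisym)
  let ?w = "unbalanced_unit_weight n"
  show "ip n (cycle_edges n) ?w \<le> real n - 2"
  proof (rule ip_le)
    fix x assume x: "x \<in> sign_vectors n"
    have x1: "x i * x i = 1" if "i < n" for i
      using x that unfolding sign_vectors_def by auto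
    define p where "p k = ?w (cycle_edge n k) * x (fst (cycle_edge n k)) * x (snd (cycle_edge n k))" for k
    have "p k \<in> {-1, 1}" if "k < n" for k
    proof -
      have "x (fst (cycle_edge n k)) \<in> {-1, 1}" "x (snd (cycle_edge n k)) \<in> {-1, 1}"
        using x that n unfolding sign_vectors_def cycle_edge_def by auto
      then show ?thesis unfolding p_def unbalanced_unit_weight_def by auto
    qed
    moreover have "(\<Prod>k<n. p k) = -1"
    proof -
      have "(\<Prod>k<n. x (fst (cycle_edge n k)) * x (snd (cycle_edge n k)))
          = (x 0 * x (n-1)) * (x 0 * x (n-1))"
        using n prod_cycle_edge_split[of n "\<lambda>e. x (fst e) * x (snd e)"]
          prod_path_telescope[of "n-1" x] x1
        by simp
      also have "\<dots> = 1" using x1 n by (simp add: algebra_simps)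
      finally show ?thesis
        using cycle_sign_unbalanced_unit_weight[OF n]
        unfolding p_def cycle_sign_def pm_sign_unbalanced_unit_weight by (simp add: prod.distrib mult.assoc)
    qed
    ultimately have "(\<Sum>k<n. p k) \<le> real n - 2" by (rule sum_le_of_prod_eq_minus_one)
    then show "(\<Sum>(i,j)\<in>cycle_edges n. ?w (i,j) * x i * x j) \<le> real n - 2"
      using n unfolding p_def by (simp add: sum_cycle_edges case_prod_beta)
  qed
  show "real n - 2 \<le> ip n (cycle_edges n) ?w"
    using ip_unbalanced_cycle_ge[OF n cycle_sign_unbalanced_unit_weight[OF n], of 0] n
    by (simp add: abs_unbalanced_unit_weight)
qed

lemma vdot_planar:
  assumes "2 \<le> n"
  shows "vdot n (\<lambda>k. if k = 0 then a else if k = 1 then b else 0)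
                (\<lambda>k. if k = 0 then c else if k = 1 then d else 0) = a * c + b * d"
proof -
  have "vdot n (\<lambda>k. if k = 0 then a else if k = 1 then b else 0)
                (\<lambda>k. if k = 0 then c else if k = 1 then d else 0)
      = (\<Sum>k<n. (if k = 0 then a * c else 0) + (if k = 1 then b * d else 0))"
    unfolding vdot_def by (intro sum.cong) auto
  also have "\<dots> = a * c + b * d" using assms by (simp add: sum.distrib)
  finally show ?thesis .
qed

lemma sdp_unbalanced_unit_weight:
  assumes n: "3 \<le> n"
  shows "sdp n (cycle_edges n) (unbalanced_unit_weight n) = real n * cos (pi / real n)"
proof (rule antisym)
  let ?w = "unbalanced_unit_weight n"
  show "sdp n (cycle_edges n) ?w \<le> real n * cos (pi / real n)"
    using sdp_cycle_le[OF n, of ?w] n by (simp add: ip_unbalanced_unit_weight)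
  define t where "t = pi / real n"
  define u :: "nat \<Rightarrow> nat \<Rightarrow> real"
    where "u i = (\<lambda>k. if k = 0 then cos (real i * t) else if k = 1 then sin (real i * t) else 0)" for i
  have dot: "vdot n (u i) (u j) = cos (real i * t - real j * t)" for i j
    using n unfolding u_def by (simp add: vdot_planar cos_diff)
  have unit: "\<forall>i<n. vdot n (u i) (u i) = 1" by (simp add: dot)
  have "(\<Sum>(i,j)\<in>cycle_edges n. ?w (i,j) * vdot n (u i) (u j)) = real n * cos t"
  proof -
    have "?w (k, Suc k) * vdot n (u k) (u (Suc k)) = cos t" if "k < n - 1" for k
      using n that by (simp add: unbalanced_unit_weight_path dot algebra_simps)
    moreover have "?w (0, n-1) * vdot n (u 0) (u (n-1)) = cos t"
    proof -
      have "real (n-1) * t = pi - t" using n unfolding t_def by (simp add: of_nat_diff field_simps)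
      then show ?thesis by (simp add: unbalanced_unit_weight_def dot)
    qed
    ultimately show ?thesis
      using n sum_cycle_edge_split[of n "\<lambda>(i,j). ?w (i,j) * vdot n (u i) (u j)"]
      by (simp add: sum_cycle_edges of_nat_diff algebra_simps)
  qed
  moreover have "(\<Sum>(i,j)\<in>cycle_edges n. ?w (i,j) * vdot n (u i) (u j)) \<le> sdp n (cycle_edges n) ?w"
    by (rule sdp_ge[where w = "unbalanced_unit_weight n", OF cycle_sdp_value_le[OF n] unit])
  ultimately show "real n * cos (pi / real n) \<le> sdp n (cycle_edges n) ?w"
    unfolding t_def by simp
qed

theorem mainTheorem6:
  fixes n :: nat
  assumes "n \<ge> 3"
  shows "grothendieck_const n (cycle_edges n) = real n / (real n - 2) * cos (pi / real n)"
proof -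
  have n: "3 \<le> n" using assms by simp
  let ?ratio = "\<lambda>w. sdp n (cycle_edges n) w / ip n (cycle_edges n) w"
  have "?ratio (unbalanced_unit_weight n) = real n / (real n - 2) * cos (pi / real n)"
    using n by (simp add: sdp_unbalanced_unit_weight ip_unbalanced_unit_weight)
  then have "real n / (real n - 2) * cos (pi / real n) \<in> range ?ratio"
    by (metis rangeI)
  then show ?thesis
    unfolding grothendieck_const_def using sdp_div_ip_cycle_le[OF n]
    by (intro cSup_eq_maximum) auto
qed

end
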